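(* Let $c>0$ and $\alpha,\beta\in\mathbb{R}$. For all $x\ge c$, $$\int_c^x\frac{dy}{y^{\alpha}(x+c-y)^{\beta}}=\Big\{\frac{1}{c(x+c)}\Big\}^{\alpha+\beta-1}\int_c^x (y+c)^{\alpha+\beta-2}\Big(\frac{c^{\alpha}}{y^{\alpha}}+\frac{c^{\beta}}{y^{\beta}}\Big)dy.$$ *)

theory Defs
  imports "HOL-Analysis.Analysis"
begin

end

theory Submission
  imports Defs
begin

text \<open>With \<open>P = x + c\<close>, split the left-hand integral at \<open>P/2\<close>. On the upper half the
  Moebius substitution \<open>y = P t / (t + c)\<close> maps \<open>[c, x]\<close> onto \<open>[P/2, x]\<close> and turns the
  integrand into \<open>(c P) powr (1 - \<alpha> - \<beta>) * (t + c) powr (\<alpha> + \<beta> - 2) * c powr \<alpha> / t powr \<alpha>\<close>.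
  The reflection \<open>y \<mapsto> P - y\<close> carries the lower half onto the upper half with \<open>\<alpha>\<close> and
  \<open>\<beta>\<close> exchanged, which produces the \<open>c powr \<beta> / t powr \<beta>\<close> term.\<close>

lemma integral_reflect_shift_real:
  fixes f :: "real \<Rightarrow> 'b::real_normed_vector"
  shows "integral {d - b..d - a} (\<lambda>y. f (d - y)) = integral {a..b} f"
  using integral_shift_real_ivl[of "-b" "-d" "-a" "\<lambda>z. f (- z)"] by simp

lemma moebius_substitution_integrand:
  fixes c t P \<alpha> \<beta> :: real
  assumes "c > 0" "t > 0" "P > 0"
  shows "P * c / (t + c)\<^sup>2 * (1 / ((P * t / (t + c)) powr \<alpha> * (P - P * t / (t + c)) powr \<beta>))
       = (1 / (c * P)) powr (\<alpha> + \<beta> - 1) * ((t + c) powr (\<alpha> + \<beta> - 2) * (c powr \<alpha> / t powr \<alpha>))"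
proof -
  have tc: "t + c > 0" using assms by simp
  have diff: "P - P * t / (t + c) = c * P / (t + c)" using tc by (simp add: field_simps)
  have pow_lo: "(c * P / (t + c)) powr \<beta> = c powr \<beta> * P powr \<beta> / (t + c) powr \<beta>"
    using assms tc by (simp add: powr_divide powr_mult)
  have pow_up: "(P * t / (t + c)) powr \<alpha> = P powr \<alpha> * t powr \<alpha> / (t + c) powr \<alpha>"
    using assms tc by (simp add: powr_divide powr_mult)
  have pow_K: "(1 / (c * P)) powr (\<alpha> + \<beta> - 1)
      = c * P / (c powr \<alpha> * c powr \<beta> * P powr \<alpha> * P powr \<beta>)"
    using assms by (simp add: powr_divide powr_mult powr_add powr_diff field_simps)
  have pow_tc: "(t + c) powr (\<alpha> + \<beta> - 2) = (t + c) powr \<alpha> * (t + c) powr \<beta> / (t + c)\<^sup>2"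
    using tc by (simp add: powr_add powr_diff)
  show ?thesis
    unfolding diff pow_lo pow_up pow_K pow_tc
    using assms tc by (simp add: field_simps powr_add power2_eq_square)
qed

lemma has_integral_upper_half:
  fixes c x \<alpha> \<beta> :: real
  assumes "c > 0" "x \<ge> c"
  shows "((\<lambda>t. (1 / (c * (x + c))) powr (\<alpha> + \<beta> - 1) *
             ((t + c) powr (\<alpha> + \<beta> - 2) * (c powr \<alpha> / t powr \<alpha>)))
          has_integral integral {(x + c) / 2..x} (\<lambda>y. 1 / (y powr \<alpha> * (x + c - y) powr \<beta>))) {c..x}"
proof -
  define P where "P = x + c"
  define g where "g t = P * t / (t + c)" for t
  define F where "F y = 1 / (y powr \<alpha> * (P - y) powr \<beta>)" for y
  have P: "P > 0" using assms by (simp add: P_def)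
  have g_ends: "g c = P / 2" "g x = x"
    using assms by (auto simp: g_def P_def field_simps)
  have g_maps: "g ` {c..x} \<subseteq> {c..x}"
  proof
    fix y assume "y \<in> g ` {c..x}"
    then obtain t where t: "c \<le> t" "t \<le> x" and y: "y = g t" by auto
    have "P * t \<le> x * (t + c)" "c * (t + c) \<le> P * t"
      using t assms unfolding P_def by (auto simp: algebra_simps intro: mult_left_mono mult_mono)
    with t assms show "y \<in> {c..x}"
      by (simp add: y g_def pos_le_divide_eq pos_divide_le_eq add_pos_nonneg)
  qed
  have "((\<lambda>t. (P * c / (t + c)\<^sup>2) *\<^sub>R F (g t)) has_integral integral {g c..g x} F) {c..x}"
  proof (rule has_integral_substitution[OF \<open>x \<ge> c\<close> _ g_maps])
    show "g c \<le> g x" using assms g_ends by (simp add: P_def)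
    show "continuous_on {c..x} F"
      using assms unfolding F_def P_def by (intro continuous_intros) auto
    fix t assume "t \<in> {c..x}"
    then have "t + c \<noteq> 0" using assms by auto
    then show "(g has_field_derivative P * c / (t + c)\<^sup>2) (at t within {c..x})"
      unfolding g_def by (auto intro!: derivative_eq_intros simp: power2_eq_square field_simps)
  qed
  then have "((\<lambda>t. (P * c / (t + c)\<^sup>2) *\<^sub>R F (g t)) has_integral integral {P / 2..x} F) {c..x}"
    by (simp only: g_ends)
  moreover have "(P * c / (t + c)\<^sup>2) *\<^sub>R F (g t) = (1 / (c * (x + c))) powr (\<alpha> + \<beta> - 1) *
                   ((t + c) powr (\<alpha> + \<beta> - 2) * (c powr \<alpha> / t powr \<alpha>))" if "t \<in> {c..x}" for t
    using moebius_substitution_integrand[of c t P \<alpha> \<beta>] that assms P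
    by (simp add: F_def g_def P_def)
  ultimately have "((\<lambda>t. (1 / (c * (x + c))) powr (\<alpha> + \<beta> - 1) *
                   ((t + c) powr (\<alpha> + \<beta> - 2) * (c powr \<alpha> / t powr \<alpha>))) has_integral integral {P / 2..x} F) {c..x}"
    by (rule has_integral_eq[rotated])
  then show ?thesis by (simp add: F_def[abs_def] P_def)
qed

theorem lemmaA1:
  fixes c \<alpha> \<beta> x :: real
  assumes "c > 0" and "x \<ge> c"
  shows "integral {c..x} (\<lambda>y. 1 / (y powr \<alpha> * (x + c - y) powr \<beta>))
       = (1 / (c * (x + c))) powr (\<alpha> + \<beta> - 1) *
         integral {c..x} (\<lambda>y. (y + c) powr (\<alpha> + \<beta> - 2) *
                              (c powr \<alpha> / y powr \<alpha> + c powr \<beta> / y powr \<beta>))"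
proof -
  define m where "m = (x + c) / 2"
  define F where "F = (\<lambda>\<alpha> \<beta> y. 1 / (y powr \<alpha> * (x + c - y) powr \<beta>))"
  define K where "K = (1 / (c * (x + c))) powr (\<alpha> + \<beta> - 1)"
  have m: "c \<le> m" "m \<le> x" using assms by (auto simp: m_def)
  have "continuous_on {c..x} (F \<alpha> \<beta>)"
    using assms unfolding F_def by (intro continuous_intros) auto
  then have split: "integral {c..m} (F \<alpha> \<beta>) + integral {m..x} (F \<alpha> \<beta>) = integral {c..x} (F \<alpha> \<beta>)"
    by (rule Henstock_Kurzweil_Integration.integral_combine[OF m integrable_continuous_real])
  have reflect: "integral {c..m} (F \<alpha> \<beta>) = integral {m..x} (F \<beta> \<alpha>)"
    using integral_reflect_shift_real[of "x + c" m c "F \<alpha> \<beta>"]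
    by (simp add: F_def m_def field_simps)
  have lower: "((\<lambda>t. K * ((t + c) powr (\<alpha> + \<beta> - 2) * (c powr \<beta> / t powr \<beta>)))
                  has_integral integral {m..x} (F \<beta> \<alpha>)) {c..x}"
    using has_integral_upper_half[OF assms, of \<beta> \<alpha>]
    unfolding K_def F_def m_def add.commute[of \<beta> \<alpha>] .
  have upper: "((\<lambda>t. K * ((t + c) powr (\<alpha> + \<beta> - 2) * (c powr \<alpha> / t powr \<alpha>)))
                  has_integral integral {m..x} (F \<alpha> \<beta>)) {c..x}"
    using has_integral_upper_half[OF assms, of \<alpha> \<beta>] unfolding K_def F_def m_def .
  have "((\<lambda>t. K * ((t + c) powr (\<alpha> + \<beta> - 2) *
                  (c powr \<alpha> / t powr \<alpha> + c powr \<beta> / t powr \<beta>))) has_integral integral {c..x} (F \<alpha> \<beta>)) {c..x}"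
    using has_integral_add[OF lower upper] unfolding reflect [symmetric] split
    by (simp add: algebra_simps)
  then have "K * integral {c..x} (\<lambda>t. (t + c) powr (\<alpha> + \<beta> - 2) *
                  (c powr \<alpha> / t powr \<alpha> + c powr \<beta> / t powr \<beta>)) = integral {c..x} (F \<alpha> \<beta>)"
    unfolding integral_mult_right [symmetric] by (rule integral_unique)
  then show ?thesis
    unfolding F_def K_def by (rule sym)
qed

end
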